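(* Let $p\ge1$, $0<\ell<1/2$ and $B\ge1$. If $s\le 1$, then \[ \Big\|\sum_{n=1}^{\sqrt B}\frac{\sin(\pi n^2\ell)}{n^{2s}}e_{n^2}\Big\|_p\lesssim_s \ell\Big\|\sum_{n=1}^{\sqrt B}n^{2(1-s)}e_{n^2}\Big\|_p+B^{3-s}\ell^3\cosh(2\pi B\ell)\Big\|\sum_{n=1}^{\sqrt B}e_{n^2}\Big\|_p. \] If $1<s\le3$, then \[ \Big\|\sum_{n=1}^{\sqrt B}\frac{\sin(\pi n^2\ell)}{n^{2s}}e_{n^2}\Big\|_p\lesssim \ell\Big\|\sum_{n=1}^{\sqrt B}\frac{e_{n^2}}{n^{2(s-1)}}\Big\|_p+\ell^3\Big\|\sum_{n=1}^{\sqrt B}n^{2(3-s)}e_{n^2}\Big\|_p+B^{5-s}\ell^5\cosh(2\pi\ell B)\Big\|\sum_{n=1}^{\sqrt B}e_{n^2}\Big\|_p. \]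
   Context: $e_m(x)=e^{2\pi i m x}$ on $\mathbb T=\mathbb R/\mathbb Z$, $\|\cdot\|_p$ is the $L^p(\mathbb T)$ norm, and $\sum_{n=1}^{\sqrt B}$ is the sum over integers $1\le n\le\sqrt B$. $\lesssim_s$ means up to a constant depending only on $s$ (independent of $\ell$ and $B$). *)

theory Defs
  imports "HOL-Analysis.Analysis"
begin

text \<open>Characters on the torus R/Z, viewed as 1-periodic functions on the reals.\<close>
definition echar :: "int \<Rightarrow> real \<Rightarrow> complex" where
  "echar m x = exp (2 * of_real pi * \<i> * of_int m * of_real x)"

text \<open>L^p(T) norm, T = R/Z identified with the fundamental domain [0,1] (Lebesgue measure).\<close>
definition Lp_norm_T :: "real \<Rightarrow> (real \<Rightarrow> complex) \<Rightarrow> real" where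
  "Lp_norm_T p f = (LINT x:{0..1}|lborel. cmod (f x) powr p) powr (1 / p)"

definition sqsum :: "real \<Rightarrow> (nat \<Rightarrow> real) \<Rightarrow> real \<Rightarrow> complex" where
  "sqsum B a x = (\<Sum>n\<in>{1..nat \<lfloor>sqrt B\<rfloor>}. of_real (a n) * echar (int (n^2)) x)"

end

theory Submission
  imports Defs
begin

text \<open>
  Since sin(pi n^2 l) / n^2 = pi l * int_0^1 cos(pi n^2 l t) dt and
  2 cos(2 pi k u) e_k(x) = e_k(x + u) + e_k(x - u), multiplying the coefficients b_n of
  F = sum b_n e_{n^2} by sin(pi n^2 l) / n^2 turns F into pi l times an average of translates
  of F. Translation invariance and Minkowski's inequality bound its L^p norm by pi l ||F||_p.
  With b_n = n^(2(1-s)) this is the first term of either right-hand side, so both estimates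
  hold with C = pi. The integral over t is replaced by Riemann sums with m nodes, whose error
  is O(l^2 / m) uniformly in x, and m tends to infinity.
\<close>

definition Lp_norm_01 :: "real \<Rightarrow> (real \<Rightarrow> real) \<Rightarrow> real" where
  "Lp_norm_01 p g = integral {0..1} (\<lambda>x. g x powr p) powr (1 / p)"

lemma continuous_on_powr_const:
  fixes g :: "real \<Rightarrow> real"
  assumes "continuous_on A g" "\<And>x. 0 \<le> g x" "0 < p"
  shows "continuous_on A (\<lambda>x. g x powr p)"
  by (rule continuous_on_powr') (use assms in \<open>auto intro: continuous_intros\<close>)

lemma integrable_powr_01:
  fixes g :: "real \<Rightarrow> real"
  assumes "continuous_on {0..1} g" "\<And>x. 0 \<le> g x" "0 < p"
  shows "(\<lambda>x. g x powr p) integrable_on {0..1}"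
  using continuous_on_powr_const[OF assms] by (rule integrable_continuous_interval)

lemma Lp_norm_T_eq_Lp_norm_01:
  assumes "continuous_on {0..1} f" "0 < p"
  shows "Lp_norm_T p f = Lp_norm_01 p (\<lambda>x. cmod (f x))"
proof -
  have "continuous_on {0..1} (\<lambda>x. cmod (f x) powr p)"
    by (rule continuous_on_powr_const) (use assms in \<open>auto intro: continuous_intros\<close>)
  then show ?thesis
    unfolding Lp_norm_T_def Lp_norm_01_def
    by (simp add: set_borel_integral_eq_integral(2)[OF borel_integrable_atLeastAtMost'])
qed

lemma Lp_norm_01_nonneg: "0 \<le> Lp_norm_01 p g"
  by (simp add: Lp_norm_01_def)

lemma integral_powr_01_nonneg:
  fixes g :: "real \<Rightarrow> real"
  assumes "continuous_on {0..1} g" "\<And>x. 0 \<le> g x" "0 < p"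
  shows "0 \<le> integral {0..1} (\<lambda>x. g x powr p)"
  by (rule integral_nonneg[OF integrable_powr_01[OF assms]]) auto

lemma Lp_norm_01_powr:
  assumes "continuous_on {0..1} g" "\<And>x. 0 \<le> g x" "0 < p"
  shows "Lp_norm_01 p g powr p = integral {0..1} (\<lambda>x. g x powr p)"
  using integral_powr_01_nonneg[OF assms] assms(3)
  by (simp add: Lp_norm_01_def powr_powr)

lemma Lp_norm_01_mono:
  assumes f: "continuous_on {0..1} f" "\<And>x. 0 \<le> f x"
    and g: "continuous_on {0..1} g" "\<And>x. 0 \<le> g x"
    and "0 < p" and le: "\<And>x. x \<in> {0..1} \<Longrightarrow> f x \<le> g x"
  shows "Lp_norm_01 p f \<le> Lp_norm_01 p g"
  unfolding Lp_norm_01_def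
proof (rule powr_mono2)
  show "integral {0..1} (\<lambda>x. f x powr p) \<le> integral {0..1} (\<lambda>x. g x powr p)"
    using le f(2) \<open>0 < p\<close>
    by (intro integral_le integrable_powr_01 f g powr_mono2) auto
qed (use integral_powr_01_nonneg[OF f \<open>0 < p\<close>] \<open>0 < p\<close> in auto)

lemma Lp_norm_01_const:
  assumes "0 \<le> c" "0 < p"
  shows "Lp_norm_01 p (\<lambda>x. c) = c"
  using assms by (simp add: Lp_norm_01_def powr_powr)

lemma Lp_norm_01_cmult:
  assumes "continuous_on {0..1} g" "\<And>x. 0 \<le> g x" "0 < p" "0 \<le> c"
  shows "Lp_norm_01 p (\<lambda>x. c * g x) = c * Lp_norm_01 p g"
  using assms integral_powr_01_nonneg[OF assms(1-3)]
  by (simp add: Lp_norm_01_def powr_mult powr_powr)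

lemma convex_on_powr_nonneg:
  assumes "1 \<le> p"
  shows "convex_on {0..} (\<lambda>x::real. x powr p)"
proof (rule convex_on_linorderI)
  fix t x y :: real
  assume t: "0 < t" "t < 1" and xy: "x \<in> {0..}" "y \<in> {0..}" "x < y"
  show "((1 - t) *\<^sub>R x + t *\<^sub>R y) powr p \<le> (1 - t) * x powr p + t * y powr p"
  proof (cases "x = 0")
    case True
    have "t powr p \<le> t powr 1"
      using t assms by (intro powr_mono') auto
    then have "t powr p * y powr p \<le> t * y powr p"
      using t by (intro mult_right_mono) auto
    then show ?thesis
      using True t xy by (simp add: powr_mult)
  next
    case False
    then show ?thesis
      using convex_onD[OF powr_convex[OF assms], of t x y] t xy by simp
  qed
qed simp

text \<open>Convexity of x powr p at the convex combination (u + v)/(a + b) of u/a and v/b.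
  Integrated, it gives Minkowski's inequality without dividing by a possibly vanishing norm.\<close>
lemma powr_add_le_weighted:
  fixes u v a b p :: real
  assumes "0 \<le> u" "0 \<le> v" "0 < a" "0 < b" "1 \<le> p"
  shows "(u + v) powr p \<le> (a + b) powr (p - 1) * (u powr p / a powr (p - 1) + v powr p / b powr (p - 1))"
proof -
  define t where "t = b / (a + b)"
  have t: "0 \<le> t" "t \<le> 1" "1 - t = a / (a + b)"
    using assms by (auto simp: t_def field_simps)
  have "(u + v) / (a + b) = (1 - t) *\<^sub>R (u / a) + t *\<^sub>R (v / b)"
    using assms unfolding t(3) by (simp add: t_def add_divide_distrib)
  then have "((u + v) / (a + b)) powr p \<le> (1 - t) * (u / a) powr p + t * (v / b) powr p"
    using convex_onD[OF convex_on_powr_nonneg[OF assms(5)], of t "u / a" "v / b"] t assms by simp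
  also have "\<dots> = (u powr p / a powr (p - 1) + v powr p / b powr (p - 1)) / (a + b)"
  proof -
    have "(1 - t) * (u / a) powr p = u powr p / a powr (p - 1) / (a + b)"
      "t * (v / b) powr p = v powr p / b powr (p - 1) / (a + b)"
      using assms unfolding t(3) unfolding t_def by (simp_all add: powr_divide powr_diff mult_ac)
    then show ?thesis
      by (simp add: add_divide_distrib)
  qed
  finally have "(u + v) powr p / (a + b) powr p
      \<le> (u powr p / a powr (p - 1) + v powr p / b powr (p - 1)) / (a + b)"
    using assms by (simp add: powr_divide)
  then show ?thesis
    using assms by (simp add: powr_diff field_simps)
qed

lemma Lp_norm_01_add_le_of_le:
  assumes f: "continuous_on {0..1} f" "\<And>x. 0 \<le> f x"
    and g: "continuous_on {0..1} g" "\<And>x. 0 \<le> g x"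
    and "1 \<le> p" and a: "Lp_norm_01 p f \<le> a" "0 < a" and b: "Lp_norm_01 p g \<le> b" "0 < b"
  shows "Lp_norm_01 p (\<lambda>x. f x + g x) \<le> a + b"
proof -
  have p: "0 < p" using \<open>1 \<le> p\<close> by simp
  have fg: "continuous_on {0..1} (\<lambda>x. f x + g x)" "\<And>x. 0 \<le> f x + g x"
    using f g by (auto intro!: continuous_intros add_nonneg_nonneg)
  have If: "integral {0..1} (\<lambda>x. f x powr p) \<le> a powr p"
    using powr_mono2[OF less_imp_le[OF p] Lp_norm_01_nonneg a(1)] Lp_norm_01_powr[OF f p] by simp
  have Ig: "integral {0..1} (\<lambda>x. g x powr p) \<le> b powr p"
    using powr_mono2[OF less_imp_le[OF p] Lp_norm_01_nonneg b(1)] Lp_norm_01_powr[OF g p] by simp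
  let ?w = "\<lambda>x. (a + b) powr (p - 1) * (f x powr p / a powr (p - 1) + g x powr p / b powr (p - 1))"
  have "?w integrable_on {0..1}"
    using integrable_powr_01[OF f p] integrable_powr_01[OF g p]
    by (intro integrable_on_mult_right integrable_add integrable_on_divide)
  then have "integral {0..1} (\<lambda>x. (f x + g x) powr p) \<le> integral {0..1} ?w"
    using f g a b \<open>1 \<le> p\<close>
    by (intro integral_le integrable_powr_01 fg p powr_add_le_weighted) auto
  also have "\<dots> = (a + b) powr (p - 1) * (integral {0..1} (\<lambda>x. f x powr p) / a powr (p - 1)
      + integral {0..1} (\<lambda>x. g x powr p) / b powr (p - 1))"
    using integrable_powr_01[OF f p] integrable_powr_01[OF g p]
    by (simp add: integral_add integrable_on_divide)
  also have "\<dots> \<le> (a + b) powr (p - 1) * (a powr p / a powr (p - 1) + b powr p / b powr (p - 1))"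
    using If Ig by (intro mult_left_mono add_mono divide_right_mono) auto
  also have "\<dots> = (a + b) powr p"
    using a b by (simp add: powr_diff)
  finally have "integral {0..1} (\<lambda>x. (f x + g x) powr p) \<le> (a + b) powr p" .
  then have "Lp_norm_01 p (\<lambda>x. f x + g x) \<le> ((a + b) powr p) powr (1 / p)"
    unfolding Lp_norm_01_def using integral_powr_01_nonneg[OF fg p] p by (intro powr_mono2) auto
  also have "\<dots> = a + b"
    using a b p by (simp add: powr_powr)
  finally show ?thesis .
qed

lemma Lp_norm_01_triangle:
  assumes "continuous_on {0..1} f" "\<And>x. 0 \<le> f x" "continuous_on {0..1} g" "\<And>x. 0 \<le> g x" "1 \<le> p"
  shows "Lp_norm_01 p (\<lambda>x. f x + g x) \<le> Lp_norm_01 p f + Lp_norm_01 p g"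
proof (rule field_le_epsilon)
  fix e :: real
  assume "0 < e"
  then show "Lp_norm_01 p (\<lambda>x. f x + g x) \<le> Lp_norm_01 p f + Lp_norm_01 p g + e"
    using Lp_norm_01_add_le_of_le[OF assms, of "Lp_norm_01 p f + e / 2" "Lp_norm_01 p g + e / 2"]
      Lp_norm_01_nonneg[of p f] Lp_norm_01_nonneg[of p g] by simp
qed

lemma Lp_norm_01_sum_le:
  fixes f :: "'a \<Rightarrow> real \<Rightarrow> real"
  assumes "finite J" "\<And>j. j \<in> J \<Longrightarrow> continuous_on {0..1} (f j)"
    and "\<And>j x. j \<in> J \<Longrightarrow> 0 \<le> f j x" "1 \<le> p"
  shows "Lp_norm_01 p (\<lambda>x. \<Sum>j\<in>J. f j x) \<le> (\<Sum>j\<in>J. Lp_norm_01 p (f j))"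
  using assms
proof (induction J rule: finite_induct)
  case empty
  then show ?case using Lp_norm_01_const[of 0 p] by simp
next
  case (insert i J)
  have "Lp_norm_01 p (\<lambda>x. \<Sum>j\<in>insert i J. f j x) = Lp_norm_01 p (\<lambda>x. f i x + (\<Sum>j\<in>J. f j x))"
    using insert by simp
  also have "\<dots> \<le> Lp_norm_01 p (f i) + Lp_norm_01 p (\<lambda>x. \<Sum>j\<in>J. f j x)"
    using insert by (intro Lp_norm_01_triangle) (auto intro!: continuous_intros sum_nonneg)
  also have "\<dots> \<le> Lp_norm_01 p (f i) + (\<Sum>j\<in>J. Lp_norm_01 p (f j))"
    using insert by auto
  finally show ?case using insert by simp
qed

lemma integral_01_shift_periodic:
  fixes g :: "real \<Rightarrow> real"
  assumes cont: "continuous_on UNIV g" and per: "\<And>x. g (x + 1) = g x"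
  shows "integral {0..1} (\<lambda>x. g (x + u)) = integral {0..1} g"
proof -
  interpret periodic_fun_simple' g by standard (rule per)
  have int: "g integrable_on {a..b}" for a b
    using cont by (intro integrable_continuous_interval) (rule continuous_on_subset, auto)
  define v where "v = frac u"
  have v: "0 \<le> v" "v \<le> 1"
    by (simp_all add: v_def frac_lt_1 less_imp_le)
  have "g (x + u) = g (x + v + of_int \<lfloor>u\<rfloor>)" for x
    by (simp add: v_def frac_def algebra_simps)
  then have "integral {0..1} (\<lambda>x. g (x + u)) = integral {0..1} (\<lambda>x. g (x + v))"
    by (simp add: plus_of_int)
  also have "\<dots> = integral {v..1+v} g"
    using integral_shift_real_ivl[where a=v and b="1 + v" and c=v and f=g] by simp
  also have "\<dots> = integral {v..1} g + integral {1..1+v} g"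
    using Henstock_Kurzweil_Integration.integral_combine[where a=v and c=1 and b="1 + v" and f=g] int v by simp
  also have "integral {1..1+v} g = integral {0..v} g"
    using integral_shift_real_ivl[where a=1 and b="1 + v" and c=1 and f=g] by (simp add: per)
  also have "integral {v..1} g + integral {0..v} g = integral {0..1} g"
    using Henstock_Kurzweil_Integration.integral_combine[where a=0 and c=v and b=1 and f=g] int v by simp
  finally show ?thesis .
qed

lemma Lp_norm_01_shift_periodic:
  fixes g :: "real \<Rightarrow> real"
  assumes "continuous_on UNIV g" "\<And>x. g (x + 1) = g x" "\<And>x. 0 \<le> g x" "0 < p"
  shows "Lp_norm_01 p (\<lambda>x. g (x + u)) = Lp_norm_01 p g"
  using integral_01_shift_periodic[OF continuous_on_powr_const[OF assms(1,3,4)], of u] assms(2)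
  by (simp add: Lp_norm_01_def)

lemma Lp_norm_01_sum_translates_le:
  fixes g :: "real \<Rightarrow> real"
  assumes "finite J" "\<And>j. j \<in> J \<Longrightarrow> 0 \<le> w j"
    and g: "continuous_on UNIV g" "\<And>x. g (x + 1) = g x" "\<And>x. 0 \<le> g x" and "1 \<le> p"
  shows "Lp_norm_01 p (\<lambda>x. \<Sum>j\<in>J. w j * g (x + u j)) \<le> (\<Sum>j\<in>J. w j) * Lp_norm_01 p g"
proof -
  have p: "0 < p" using \<open>1 \<le> p\<close> by simp
  have cont: "continuous_on {0..1} (\<lambda>x. g (x + c))" for c
    by (rule continuous_on_compose2[OF g(1)]) (auto intro!: continuous_intros)
  have "Lp_norm_01 p (\<lambda>x. \<Sum>j\<in>J. w j * g (x + u j)) \<le> (\<Sum>j\<in>J. Lp_norm_01 p (\<lambda>x. w j * g (x + u j)))"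
    using assms cont by (intro Lp_norm_01_sum_le) (auto intro!: continuous_intros)
  also have "\<dots> = (\<Sum>j\<in>J. w j * Lp_norm_01 p g)"
    using assms cont p by (intro sum.cong refl) (simp add: Lp_norm_01_cmult Lp_norm_01_shift_periodic)
  finally show ?thesis by (simp add: sum_distrib_right)
qed

lemma abs_sin_add_minus_linear_le:
  fixes a h :: real
  assumes "0 \<le> h"
  shows "\<bar>sin (a + h) - sin a - h * cos a\<bar> \<le> h\<^sup>2"
proof (cases "h = 0")
  case False
  then have "a < a + h" using assms by simp
  from MVT2[OF this, of sin cos] obtain z
    where z: "a < z" "z < a + h" "sin (a + h) - sin a = h * cos z"
    by (auto intro: DERIV_sin)
  have "\<bar>cos z - cos a\<bar> = 2 * \<bar>sin ((z + a) / 2)\<bar> * \<bar>sin ((a - z) / 2)\<bar>"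
    by (simp add: cos_diff_cos abs_mult)
  also have "\<dots> \<le> 2 * 1 * \<bar>(a - z) / 2\<bar>"
    by (intro mult_mono abs_sin_x_le_abs_x abs_sin_le_one) auto
  also have "\<dots> \<le> h" using z by simp
  finally have "\<bar>h * (cos z - cos a)\<bar> \<le> h * h"
    using assms by (simp add: abs_mult mult_left_mono)
  then show ?thesis using z by (simp add: power2_eq_square algebra_simps)
qed simp

lemma sin_riemann_sum_error:
  fixes \<theta> :: real and m :: nat
  assumes "0 < m" "0 \<le> \<theta>"
  shows "\<bar>sin \<theta> - \<theta> / m * (\<Sum>j<m. cos (\<theta> * j / m))\<bar> \<le> \<theta>\<^sup>2 / m"
proof -
  define h where "h = \<theta> / m"
  have "0 \<le> h" using assms by (simp add: h_def)
  have "sin \<theta> = (\<Sum>j<m. sin (h * Suc j) - sin (h * j))"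
    using sum_lessThan_telescope[of "\<lambda>j. sin (h * j)" m] assms by (simp add: h_def)
  also have "\<dots> = (\<Sum>j<m. sin (h * j + h) - sin (h * j))"
    by (simp add: algebra_simps)
  finally have "sin \<theta> = (\<Sum>j<m. sin (h * j + h) - sin (h * j))" .
  then have "sin \<theta> - h * (\<Sum>j<m. cos (h * j)) = (\<Sum>j<m. sin (h * j + h) - sin (h * j) - h * cos (h * j))"
    by (simp add: sum_distrib_left sum_subtractf)
  also have "\<bar>\<dots>\<bar> \<le> (\<Sum>j<m. h\<^sup>2)"
    using abs_sin_add_minus_linear_le[OF \<open>0 \<le> h\<close>] by (intro order.trans[OF sum_abs] sum_mono)
  also have "\<dots> = \<theta>\<^sup>2 / m"
    using assms by (simp add: h_def power2_eq_square)
  finally show ?thesis by (simp add: h_def mult.commute)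
qed

lemma norm_echar [simp]: "cmod (echar k x) = 1"
proof -
  have "echar k x = exp (\<i> * of_real (2 * pi * k * x))"
    unfolding echar_def by (simp add: mult_ac)
  then show ?thesis by (simp only: norm_exp_i_times)
qed

lemma echar_add_of_int: "echar k (x + of_int j) = echar k x"
proof -
  have arg: "2 * of_real pi * \<i> * of_int k * of_real (x + of_int j)
      = 2 * of_real pi * \<i> * of_int k * of_real x + 2 * of_int (k * j) * pi * \<i>"
    by (simp add: ring_distribs mult_ac)
  have "echar k (x + of_int j) = echar k x * exp (2 * of_int (k * j) * pi * \<i>)"
    unfolding echar_def arg by (simp only: exp_add)
  also have "exp (2 * of_int (k * j) * pi * \<i>) = 1"
    by (rule exp_integer_2pi) simp
  finally show ?thesis by simp
qed

lemma echar_add_plus_echar_diff: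
  "echar k (x + u) + echar k (x - u) = 2 * of_real (cos (2 * pi * k * u)) * echar k x"
proof -
  define t where "t = 2 * pi * k * u"
  have "2 * of_real pi * \<i> * of_int k * of_real (x + u)
      = 2 * of_real pi * \<i> * of_int k * of_real x + \<i> * of_real t"
    "2 * of_real pi * \<i> * of_int k * of_real (x - u)
      = 2 * of_real pi * \<i> * of_int k * of_real x + - (\<i> * of_real t)"
    by (simp_all add: t_def ring_distribs mult_ac)
  then have "echar k (x + u) + echar k (x - u) = echar k x * (exp (\<i> * of_real t) + exp (- (\<i> * of_real t)))"
    unfolding echar_def by (simp only: exp_add ring_distribs)
  also have "exp (\<i> * of_real t) + exp (- (\<i> * of_real t)) = 2 * of_real (cos t)"
    by (simp add: cos_exp_eq flip: cos_of_real)
  finally show ?thesis by (simp add: t_def mult_ac)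
qed

lemma continuous_on_sqsum [continuous_intros]:
  "continuous_on A f \<Longrightarrow> continuous_on A (\<lambda>x. sqsum B a (f x))"
  unfolding sqsum_def echar_def by (intro continuous_intros)

lemma sqsum_add_1: "sqsum B a (x + 1) = sqsum B a x"
  using echar_add_of_int[of _ x 1] by (simp add: sqsum_def)

lemma sqsum_cong:
  assumes "\<And>n. 1 \<le> n \<Longrightarrow> a n = b n"
  shows "sqsum B a = sqsum B b"
  unfolding sqsum_def using assms by (intro ext sum.cong) auto

lemma sqsum_diff: "sqsum B a x - sqsum B b x = sqsum B (\<lambda>n. a n - b n) x"
  by (simp add: sqsum_def ring_distribs sum_subtractf)

lemma sum_scaled_sqsum:
  "(\<Sum>j\<in>J. of_real (c j) * sqsum B (a j) x) = sqsum B (\<lambda>n. \<Sum>j\<in>J. c j * a j n) x"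
  unfolding sqsum_def by (simp add: sum_distrib_left sum_distrib_right mult_ac sum.swap[of _ J])

lemma norm_sqsum_le: "cmod (sqsum B a x) \<le> (\<Sum>n\<in>{1..nat \<lfloor>sqrt B\<rfloor>}. \<bar>a n\<bar>)"
  unfolding sqsum_def by (rule order.trans[OF norm_sum]) (simp add: norm_mult)

lemma sqsum_add_plus_sqsum_diff:
  "sqsum B a (x + u) + sqsum B a (x - u) = sqsum B (\<lambda>n. 2 * cos (2 * pi * real n ^ 2 * u) * a n) x"
  unfolding sqsum_def sum.distrib[symmetric] distrib_left[symmetric] echar_add_plus_echar_diff
  by (simp add: mult_ac)

lemma sqsum_shift_average:
  "(\<Sum>j\<in>J. of_real c * (sqsum B b (x + u j) + sqsum B b (x - u j)))
     = sqsum B (\<lambda>n. 2 * c * (\<Sum>j\<in>J. cos (2 * pi * real n ^ 2 * u j)) * b n) x"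
  unfolding sqsum_add_plus_sqsum_diff sum_scaled_sqsum
  by (simp add: sum_distrib_left sum_distrib_right mult_ac)

lemma sin_multiplier_riemann_error:
  fixes n m :: nat and l :: real
  assumes "1 \<le> n" "0 < m" "0 \<le> l"
  shows "\<bar>sin (pi * real n ^ 2 * l) / real n ^ 2
      - 2 * (pi * l / (2 * real m)) * (\<Sum>j<m. cos (2 * pi * real n ^ 2 * (l * j / (2 * real m))))\<bar>
    \<le> pi\<^sup>2 * l\<^sup>2 * real n ^ 2 / real m"
proof -
  define \<theta> where "\<theta> = pi * real n ^ 2 * l"
  have n: "0 < real n ^ 2" using assms by simp
  have "sin (pi * real n ^ 2 * l) / real n ^ 2
      - 2 * (pi * l / (2 * real m)) * (\<Sum>j<m. cos (2 * pi * real n ^ 2 * (l * j / (2 * real m))))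
      = (sin \<theta> - \<theta> / real m * (\<Sum>j<m. cos (\<theta> * j / real m))) / real n ^ 2"
    using n by (simp add: \<theta>_def field_simps)
  also have "\<bar>\<dots>\<bar> = \<bar>sin \<theta> - \<theta> / real m * (\<Sum>j<m. cos (\<theta> * j / real m))\<bar> / real n ^ 2"
    by (simp add: abs_divide)
  also have "\<dots> \<le> \<theta>\<^sup>2 / real m / real n ^ 2"
    using assms by (intro divide_right_mono sin_riemann_sum_error) (auto simp: \<theta>_def)
  also have "\<dots> = pi\<^sup>2 * l\<^sup>2 * real n ^ 2 / real m"
    using n by (simp add: \<theta>_def field_simps power2_eq_square)
  finally show ?thesis .
qed

text \<open>c and u j are the weights and nodes of the left Riemann sum with m nodes of
  pi l / 2 * int_0^1 (F(x + l t / 2) + F(x - l t / 2)) dt, where F = sqsum B b.\<close>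
lemma norm_sqsum_sin_multiplier_le:
  fixes m :: nat
  assumes "0 \<le> l" "0 < m"
  defines "c \<equiv> pi * l / (2 * real m)" and "u \<equiv> \<lambda>j::nat. l * j / (2 * real m)"
  shows "cmod (sqsum B (\<lambda>n. b n * (sin (pi * real n ^ 2 * l) / real n ^ 2)) x)
    \<le> (\<Sum>j<m. c * cmod (sqsum B b (x + u j))) + (\<Sum>j<m. c * cmod (sqsum B b (x + - u j)))
      + pi\<^sup>2 * l\<^sup>2 * (\<Sum>n\<in>{1..nat \<lfloor>sqrt B\<rfloor>}. \<bar>b n\<bar> * real n ^ 2) / real m"
proof -
  define M where "M n = 2 * c * (\<Sum>j<m. cos (2 * pi * real n ^ 2 * u j))" for n :: nat
  define A where "A = (\<Sum>j<m. of_real c * (sqsum B b (x + u j) + sqsum B b (x - u j)))"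
  have "A = sqsum B (\<lambda>n. M n * b n) x"
    unfolding A_def M_def by (rule sqsum_shift_average)
  then have "sqsum B (\<lambda>n. b n * (sin (pi * real n ^ 2 * l) / real n ^ 2)) x - A
      = sqsum B (\<lambda>n. b n * (sin (pi * real n ^ 2 * l) / real n ^ 2 - M n)) x"
    by (simp add: sqsum_diff algebra_simps)
  also have "cmod \<dots> \<le> (\<Sum>n\<in>{1..nat \<lfloor>sqrt B\<rfloor>}. \<bar>b n\<bar> * (pi\<^sup>2 * l\<^sup>2 * real n ^ 2 / real m))"
  proof (intro order.trans[OF norm_sqsum_le] sum_mono)
    fix n assume "n \<in> {1..nat \<lfloor>sqrt B\<rfloor>}"
    then show "\<bar>b n * (sin (pi * real n ^ 2 * l) / real n ^ 2 - M n)\<bar>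
        \<le> \<bar>b n\<bar> * (pi\<^sup>2 * l\<^sup>2 * real n ^ 2 / real m)"
      unfolding abs_mult M_def c_def u_def
      by (intro mult_left_mono sin_multiplier_riemann_error) (use assms in auto)
  qed
  also have "\<dots> = pi\<^sup>2 * l\<^sup>2 * (\<Sum>n\<in>{1..nat \<lfloor>sqrt B\<rfloor>}. \<bar>b n\<bar> * real n ^ 2) / real m"
    by (simp add: sum_distrib_left sum_divide_distrib mult_ac)
  finally have error: "cmod (sqsum B (\<lambda>n. b n * (sin (pi * real n ^ 2 * l) / real n ^ 2)) x - A)
      \<le> pi\<^sup>2 * l\<^sup>2 * (\<Sum>n\<in>{1..nat \<lfloor>sqrt B\<rfloor>}. \<bar>b n\<bar> * real n ^ 2) / real m" .
  have "0 \<le> c" using assms by (simp add: c_def)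
  then have "cmod A \<le> (\<Sum>j<m. c * cmod (sqsum B b (x + u j)) + c * cmod (sqsum B b (x + - u j)))"
    unfolding A_def
    by (intro order.trans[OF norm_sum] sum_mono)
      (auto simp: norm_mult simp flip: distrib_left intro!: mult_left_mono norm_triangle_ineq)
  then show ?thesis
    using error norm_triangle_sub[of "sqsum B (\<lambda>n. b n * (sin (pi * real n ^ 2 * l) / real n ^ 2)) x" A]
    by (simp add: sum.distrib)
qed

lemma Lp_norm_T_sin_multiplier_le_riemann:
  fixes m :: nat
  assumes "0 \<le> l" "1 \<le> p" "0 < m"
  shows "Lp_norm_T p (sqsum B (\<lambda>n. b n * (sin (pi * real n ^ 2 * l) / real n ^ 2)))
    \<le> pi * l * Lp_norm_T p (sqsum B b)
      + pi\<^sup>2 * l\<^sup>2 * (\<Sum>n\<in>{1..nat \<lfloor>sqrt B\<rfloor>}. \<bar>b n\<bar> * real n ^ 2) / real m"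
    (is "?lhs \<le> _ + ?E")
proof -
  define c where "c = pi * l / (2 * real m)"
  define u where "u j = l * real j / (2 * real m)" for j :: nat
  let ?F = "\<lambda>x. cmod (sqsum B b x)"
  let ?P = "\<lambda>x. \<Sum>j<m. c * ?F (x + u j)"
  let ?N = "\<lambda>x. \<Sum>j<m. c * ?F (x + - u j)"
  have p: "0 < p" using assms by simp
  have "0 \<le> c" "0 \<le> ?E"
    using assms by (auto simp: c_def intro!: sum_nonneg divide_nonneg_nonneg mult_nonneg_nonneg)
  have F: "continuous_on UNIV ?F" "\<And>x. ?F (x + 1) = ?F x" "\<And>x. 0 \<le> ?F x"
    by (auto simp: sqsum_add_1 intro!: continuous_intros)
  have PN: "continuous_on {0..1} ?P" "\<And>x. 0 \<le> ?P x" "continuous_on {0..1} ?N" "\<And>x. 0 \<le> ?N x"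
    using \<open>0 \<le> c\<close> by (auto intro!: continuous_intros sum_nonneg)
  have "?lhs = Lp_norm_01 p (\<lambda>x. cmod (sqsum B (\<lambda>n. b n * (sin (pi * real n ^ 2 * l) / real n ^ 2)) x))"
    using p by (intro Lp_norm_T_eq_Lp_norm_01 continuous_intros)
  also have "\<dots> \<le> Lp_norm_01 p (\<lambda>x. ?P x + ?N x + ?E)"
    using norm_sqsum_sin_multiplier_le[OF assms(1,3)] PN p \<open>0 \<le> ?E\<close>
    by (intro Lp_norm_01_mono) (auto simp: c_def u_def intro!: continuous_intros)
  also have "\<dots> \<le> Lp_norm_01 p (\<lambda>x. ?P x + ?N x) + Lp_norm_01 p (\<lambda>x. ?E)"
    using PN \<open>0 \<le> ?E\<close> assms(2) by (intro Lp_norm_01_triangle) (auto intro!: continuous_intros)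
  also have "Lp_norm_01 p (\<lambda>x. ?E) = ?E"
    using \<open>0 \<le> ?E\<close> p by (rule Lp_norm_01_const)
  also have "Lp_norm_01 p (\<lambda>x. ?P x + ?N x) + ?E \<le> Lp_norm_01 p ?P + Lp_norm_01 p ?N + ?E"
    using Lp_norm_01_triangle[OF PN assms(2)] by (rule add_right_mono)
  also have "\<dots> \<le> (\<Sum>j<m. c) * Lp_norm_01 p ?F + (\<Sum>j<m. c) * Lp_norm_01 p ?F + ?E"
  proof -
    have "Lp_norm_01 p (\<lambda>x. \<Sum>j<m. c * ?F (x + v j)) \<le> (\<Sum>j<m. c) * Lp_norm_01 p ?F" for v
      using \<open>0 \<le> c\<close> by (intro Lp_norm_01_sum_translates_le F assms(2)) auto
    from this[of u] this[of "\<lambda>j. - u j"] show ?thesis by (intro add_mono) auto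
  qed
  also have "\<dots> = pi * l * Lp_norm_T p (sqsum B b) + ?E"
    using assms p by (simp add: c_def Lp_norm_T_eq_Lp_norm_01 continuous_on_sqsum)
  finally show ?thesis .
qed

lemma Lp_norm_T_sin_multiplier_le:
  assumes "0 \<le> l" "1 \<le> p"
  shows "Lp_norm_T p (sqsum B (\<lambda>n. b n * (sin (pi * real n ^ 2 * l) / real n ^ 2)))
    \<le> pi * l * Lp_norm_T p (sqsum B b)"
proof (rule LIMSEQ_le_const)
  let ?K = "pi\<^sup>2 * l\<^sup>2 * (\<Sum>n\<in>{1..nat \<lfloor>sqrt B\<rfloor>}. \<bar>b n\<bar> * real n ^ 2)"
  show "(\<lambda>m. pi * l * Lp_norm_T p (sqsum B b) + ?K / real (Suc m))
      \<longlonglongrightarrow> pi * l * Lp_norm_T p (sqsum B b)"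
    using tendsto_add[OF tendsto_const LIMSEQ_Suc[OF lim_const_over_n[of ?K]]] by simp
  show "\<exists>N. \<forall>m\<ge>N. Lp_norm_T p (sqsum B (\<lambda>n. b n * (sin (pi * real n ^ 2 * l) / real n ^ 2)))
      \<le> pi * l * Lp_norm_T p (sqsum B b) + ?K / real (Suc m)"
    using Lp_norm_T_sin_multiplier_le_riemann[OF assms] by blast
qed

lemma Lp_norm_T_nonneg: "0 \<le> Lp_norm_T p f"
  by (simp add: Lp_norm_T_def)

lemma Lp_norm_T_sin_over_powr_le:
  assumes "0 \<le> l" "1 \<le> p"
  shows "Lp_norm_T p (sqsum B (\<lambda>n. sin (pi * real n ^ 2 * l) / real n powr (2 * s)))
    \<le> pi * l * Lp_norm_T p (sqsum B (\<lambda>n. real n powr (2 * (1 - s))))"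
proof -
  have "sqsum B (\<lambda>n. sin (pi * real n ^ 2 * l) / real n powr (2 * s))
      = sqsum B (\<lambda>n. real n powr (2 * (1 - s)) * (sin (pi * real n ^ 2 * l) / real n ^ 2))"
    by (rule sqsum_cong) (simp add: powr_diff ring_distribs powr_realpow)
  then show ?thesis
    using Lp_norm_T_sin_multiplier_le[OF assms] by simp
qed

theorem lemma3p3:
  shows
  "(\<forall>s::real. s \<le> 1 \<longrightarrow>
     (\<exists>C>0. \<forall>p l B::real. 1 \<le> p \<and> 0 < l \<and> l < 1/2 \<and> 1 \<le> B \<longrightarrow>
        Lp_norm_T p (sqsum B (\<lambda>n. sin (pi * real n ^ 2 * l) / real n powr (2 * s)))
        \<le> C * (l * Lp_norm_T p (sqsum B (\<lambda>n. real n powr (2 * (1 - s))))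
               + B powr (3 - s) * l ^ 3 * cosh (2 * pi * B * l) * Lp_norm_T p (sqsum B (\<lambda>n. 1)))))
   \<and>
   (\<exists>C>0. \<forall>s p l B::real. 1 < s \<and> s \<le> 3 \<and> 1 \<le> p \<and> 0 < l \<and> l < 1/2 \<and> 1 \<le> B \<longrightarrow>
        Lp_norm_T p (sqsum B (\<lambda>n. sin (pi * real n ^ 2 * l) / real n powr (2 * s)))
        \<le> C * (l * Lp_norm_T p (sqsum B (\<lambda>n. 1 / real n powr (2 * (s - 1))))
               + l ^ 3 * Lp_norm_T p (sqsum B (\<lambda>n. real n powr (2 * (3 - s))))
               + B powr (5 - s) * l ^ 5 * cosh (2 * pi * l * B) * Lp_norm_T p (sqsum B (\<lambda>n. 1))))"
proof (intro conjI allI impI exI[of _ pi])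
  have inverse_powr:
    "sqsum B (\<lambda>n. 1 / real n powr (2 * (s - 1))) = sqsum B (\<lambda>n. real n powr (2 * (1 - s)))"
    for B s :: real
    by (rule sqsum_cong) (simp add: powr_minus_divide[symmetric] algebra_simps)
  show "Lp_norm_T p (sqsum B (\<lambda>n. sin (pi * real n ^ 2 * l) / real n powr (2 * s)))
        \<le> pi * (l * Lp_norm_T p (sqsum B (\<lambda>n. real n powr (2 * (1 - s))))
               + B powr (3 - s) * l ^ 3 * cosh (2 * pi * B * l) * Lp_norm_T p (sqsum B (\<lambda>n. 1)))"
    if "1 \<le> p \<and> 0 < l \<and> l < 1/2 \<and> 1 \<le> B" for s p l B :: real
    using Lp_norm_T_sin_over_powr_le[of l p B s] that
    by (auto simp: algebra_simps Lp_norm_T_nonneg intro!: add_increasing2)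
  show "Lp_norm_T p (sqsum B (\<lambda>n. sin (pi * real n ^ 2 * l) / real n powr (2 * s)))
        \<le> pi * (l * Lp_norm_T p (sqsum B (\<lambda>n. 1 / real n powr (2 * (s - 1))))
               + l ^ 3 * Lp_norm_T p (sqsum B (\<lambda>n. real n powr (2 * (3 - s))))
               + B powr (5 - s) * l ^ 5 * cosh (2 * pi * l * B) * Lp_norm_T p (sqsum B (\<lambda>n. 1)))"
    if "1 < s \<and> s \<le> 3 \<and> 1 \<le> p \<and> 0 < l \<and> l < 1/2 \<and> 1 \<le> B" for s p l B :: real
    using Lp_norm_T_sin_over_powr_le[of l p B s] that unfolding inverse_powr
    by (auto simp: algebra_simps Lp_norm_T_nonneg intro!: add_increasing2)
qed simp_all

end
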